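(* For each $t\in\{0,1,\dots,T-1\}$, $k\in\mathbb{N}_0$ and $i\in\{1,\dots,N\}$, there exists an integer control limit $\delta_i^{(k,t)}$ with $0<\delta_i^{(k,t)}\le\xi_i$ such that, for every $x\in\mathbb{N}_0$, the action $a=1$ (replacement) is optimal in state $(x,k)$ at epoch $t$ if and only if $x\ge\delta_i^{(k,t)}$.
   Context: Fix integers $N\ge1$, $T\ge1$, reals $\alpha_0,\beta_0>0$, and for each $i\in\{1,\dots,N\}$ an integer failure threshold $\xi_i\ge1$ and costs $0<c_p^i<c_u^i$. $\mathbb{N}_0=\{0,1,2,\dots\}$. For real $r>0$ and $p\in(0,1)$, $NB(r,p)$ is the distribution on $\mathbb{N}_0$ with $P(n)=\frac{\Gamma(n+r)}{\Gamma(r)n!}p^r(1-p)^n$; $NB(0,p)$ is the point mass at $0$. For $t\in\{0,\dots,T\}$ let $p_t=\frac{\beta_0+Nt}{\beta_0+Nt+1}$. Let $\mathbb{I}_i(x)=1$ if $x\ge\xi_i$, else $0$; $\mathcal{A}_i(x)=\{0,1\}$ if $x<\xi_i$ and $\{1\}$ if $x\ge\xi_i$ ($a=1$: replacement, $a=0$: no action); $C_i(x,a)=a(1-\mathbb{I}_i(x))c_p^i+\mathbb{I}_i(x)c_u^i$. Define $\tilde V^{N,i}_T(x,k)=\mathbb{I}_i(x)c_u^i$ and for $t=T-1,\dots,0$: $\tilde V^{N,i}_t(x,k)=\min_{a\in\mathcal{A}_i(x)}\{C_i(x,a)+\mathbb{E}[\tilde V^{N,i}_{t+1}(x(1-a)+Z,\;k+Z+K)]\}$,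 where $Z\sim NB(\alpha_0+k,p_t)$ and $K\sim NB((N-1)(\alpha_0+k),p_t)$ are independent. An action $a\in\mathcal{A}_i(x)$ is optimal in state $(x,k)$ at epoch $t$ if it attains this minimum. *)

theory Defs
  imports "HOL-Analysis.Analysis"
begin

definition nb_pmf :: "real \<Rightarrow> real \<Rightarrow> nat \<Rightarrow> real" where
  "nb_pmf r p n =
     (if r = 0 then (if n = 0 then 1 else 0)
      else Gamma (real n + r) / (Gamma r * fact n) * p powr r * (1 - p) ^ n)"

definition p_t :: "nat \<Rightarrow> real \<Rightarrow> nat \<Rightarrow> real" where
  "p_t N b0 t = (b0 + real N * real t) / (b0 + real N * real t + 1)"

definition nb_expect :: "real \<Rightarrow> real \<Rightarrow> real \<Rightarrow> (nat \<Rightarrow> nat \<Rightarrow> real) \<Rightarrow> real" where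
  "nb_expect r1 r2 p f = (\<Sum>z. \<Sum>j. nb_pmf r1 p z * nb_pmf r2 p j * f z j)"

definition fail_ind :: "nat \<Rightarrow> nat \<Rightarrow> real" where
  "fail_ind xi x = (if x \<ge> xi then 1 else 0)"

definition actions :: "nat \<Rightarrow> nat \<Rightarrow> nat set" where
  "actions xi x = (if x < xi then {0, 1} else {1})"

definition cost :: "nat \<Rightarrow> real \<Rightarrow> real \<Rightarrow> nat \<Rightarrow> nat \<Rightarrow> real" where
  "cost xi cp cu x a = real a * (1 - fail_ind xi x) * cp + fail_ind xi x * cu"

definition qval :: "nat \<Rightarrow> real \<Rightarrow> real \<Rightarrow> nat \<Rightarrow> real \<Rightarrow> real
     \<Rightarrow> nat \<Rightarrow> (nat \<Rightarrow> nat \<Rightarrow> real) \<Rightarrow> nat \<Rightarrow> nat \<Rightarrow> nat \<Rightarrow> real" where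
  "qval N a0 b0 xi cp cu t V x k a =
     cost xi cp cu x a
     + nb_expect (a0 + real k) ((real N - 1) * (a0 + real k)) (p_t N b0 t)
         (\<lambda>z j. V (x * (1 - a) + z) (k + z + j))"

text \<open>Value function indexed by the number n of remaining epochs (epoch t = T - n).\<close>
primrec Vrem :: "nat \<Rightarrow> nat \<Rightarrow> real \<Rightarrow> real \<Rightarrow> nat \<Rightarrow> real \<Rightarrow> real
     \<Rightarrow> nat \<Rightarrow> nat \<Rightarrow> nat \<Rightarrow> real" where
  "Vrem N T a0 b0 xi cp cu 0 = (\<lambda>x k. fail_ind xi x * cu)"
| "Vrem N T a0 b0 xi cp cu (Suc n) =
     (\<lambda>x k. Min ((\<lambda>a. qval N a0 b0 xi cp cu (T - Suc n) (Vrem N T a0 b0 xi cp cu n) x k a)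
                    ` actions xi x))"

definition Vt :: "nat \<Rightarrow> nat \<Rightarrow> real \<Rightarrow> real \<Rightarrow> nat \<Rightarrow> real \<Rightarrow> real
     \<Rightarrow> nat \<Rightarrow> nat \<Rightarrow> nat \<Rightarrow> real" where
  "Vt N T a0 b0 xi cp cu t = Vrem N T a0 b0 xi cp cu (T - t)"

definition optimal :: "nat \<Rightarrow> nat \<Rightarrow> real \<Rightarrow> real \<Rightarrow> nat \<Rightarrow> real \<Rightarrow> real
     \<Rightarrow> nat \<Rightarrow> nat \<Rightarrow> nat \<Rightarrow> nat \<Rightarrow> bool" where
  "optimal N T a0 b0 xi cp cu t x k a \<longleftrightarrow>
     a \<in> actions xi x \<and>
     (\<forall>b\<in>actions xi x.
        qval N a0 b0 xi cp cu t (Vt N T a0 b0 xi cp cu (Suc t)) x k a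
        \<le> qval N a0 b0 xi cp cu t (Vt N T a0 b0 xi cp cu (Suc t)) x k b)"

end

theory Submission
  imports Defs
begin

text \<open>
  By induction over the remaining epochs, every value function is bounded and nondecreasing
  in the deterioration level \<open>x\<close>; this needs only that expectations against the
  negative binomial weights are monotone. Hence the advantage of replacing,
  \<open>E[V(x + Z, \<dots>)] - c\<^sub>p - E[V(Z, \<dots>)]\<close>, is nondecreasing in \<open>x\<close>. It is negative at
  \<open>x = 0\<close> because \<open>c\<^sub>p > 0\<close>, and replacement is forced from \<open>x = \<xi>\<close> on, so the states in which
  replacing is optimal form an up-set of \<open>\<nat>\<close> whose least element is the control limit.
\<close>

lemma nat_upward_closed_threshold:
  fixes P :: "nat \<Rightarrow> bool"
  assumes up: "\<And>x y. P x \<Longrightarrow> x \<le> y \<Longrightarrow> P y" and "P m" and "\<not> P 0"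
  shows "\<exists>\<delta>. 0 < \<delta> \<and> \<delta> \<le> m \<and> (\<forall>x. P x \<longleftrightarrow> \<delta> \<le> x)"
proof (intro exI conjI allI iffI)
  let ?\<delta> = "LEAST x. P x"
  have "P ?\<delta>" using \<open>P m\<close> by (rule LeastI)
  then show "0 < ?\<delta>" using \<open>\<not> P 0\<close> by (cases ?\<delta>) auto
  show "?\<delta> \<le> m" using \<open>P m\<close> by (rule Least_le)
  show "?\<delta> \<le> x" if "P x" for x using that by (rule Least_le)
  show "P x" if "?\<delta> \<le> x" for x using up[OF \<open>P ?\<delta>\<close> that] .
qed

lemma summable_mult_bounded:
  fixes w f :: "nat \<Rightarrow> real"
  assumes "summable w" and "\<And>n. 0 \<le> w n" and "\<And>n. \<bar>f n\<bar> \<le> B"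
  shows "summable (\<lambda>n. w n * f n)"
proof (rule summable_comparison_test'[where N = 0])
  show "summable (\<lambda>n. w n * B)" using \<open>summable w\<close> by (rule summable_mult2)
  show "norm (w n * f n) \<le> w n * B" for n
    using assms(2,3) by (simp add: abs_mult mult_left_mono)
qed

lemma abs_suminf_mult_le:
  fixes w f :: "nat \<Rightarrow> real"
  assumes "w sums 1" and "\<And>n. 0 \<le> w n" and "\<And>n. \<bar>f n\<bar> \<le> B"
  shows "\<bar>\<Sum>n. w n * f n\<bar> \<le> B"
proof -
  have w: "summable w" using \<open>w sums 1\<close> by (rule sums_summable)
  have bound: "\<bar>w n * f n\<bar> \<le> w n * B" for n
    using assms(2,3) by (simp add: abs_mult mult_left_mono)
  have "summable (\<lambda>n. \<bar>w n * f n\<bar>)"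
    using bound by (intro summable_rabs_comparison_test[OF _ summable_mult2[OF w]]) blast
  then have "\<bar>\<Sum>n. w n * f n\<bar> \<le> (\<Sum>n. \<bar>w n * f n\<bar>)"
    by (rule summable_rabs)
  also have "\<dots> \<le> (\<Sum>n. w n * B)"
    using bound \<open>summable (\<lambda>n. \<bar>w n * f n\<bar>)\<close> by (intro suminf_le summable_mult2 w)
  also have "\<dots> = B"
    using sums_unique[OF sums_mult2[OF \<open>w sums 1\<close>, of B]] by simp
  finally show ?thesis .
qed

lemma nb_pmf_nonneg:
  assumes "0 \<le> r" and "0 < p" and "p < 1"
  shows "0 \<le> nb_pmf r p n"
proof (cases "r = 0")
  case False
  with assms have "0 < r" by simp
  then have "0 < Gamma (real n + r)" and "0 < Gamma r" by (simp_all add: Gamma_real_pos)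
  with assms show ?thesis by (simp add: nb_pmf_def)
qed (simp add: nb_pmf_def)

text \<open>The negative binomial series \<open>\<Sum>n. (r)\<^sub>n / n! \<cdot> q\<^sup>n = (1 - q) powr (-r)\<close> with \<open>q = 1 - p\<close>.\<close>
lemma nb_pmf_sums:
  assumes "0 \<le> r" and "0 < p" and "p < 1"
  shows "nb_pmf r p sums 1"
proof (cases "r = 0")
  case True
  then have "nb_pmf r p = (\<lambda>n. if n = 0 then 1 else 0)" by (auto simp: nb_pmf_def)
  then show ?thesis using sums_single[of 0 "\<lambda>_. 1::real"] by (simp add: if_distrib)
next
  case False
  with assms have "0 < r" by simp
  have "\<bar>-(1 - p)\<bar> < 1" using assms by simp
  from gen_binomial_real[OF this, of "-r"]
  have binomial: "(\<lambda>n. ((-r) gchoose n) * (-(1 - p)) ^ n) sums p powr (-r)" by simp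
  have coeff: "((-r) gchoose n) * (-(1 - p)) ^ n = pochhammer r n / fact n * (1 - p) ^ n" for n
  proof -
    have "((-r) gchoose n) * (-(1 - p)) ^ n
        = ((-1) ^ n * (-1) ^ n) * (pochhammer r n / fact n * (1 - p) ^ n)"
      unfolding gbinomial_pochhammer power_minus[of "1 - p"] by (simp add: divide_inverse ac_simps)
    also have "(-1::real) ^ n * (-1) ^ n = 1" by (simp flip: power_mult_distrib)
    finally show ?thesis by simp
  qed
  have "r \<notin> \<int>\<^sub>\<le>\<^sub>0" using \<open>0 < r\<close> by (auto elim!: nonpos_Ints_cases)
  then have "nb_pmf r p = (\<lambda>n. p powr r * (pochhammer r n / fact n * (1 - p) ^ n))"
    using False by (simp add: fun_eq_iff nb_pmf_def pochhammer_Gamma add.commute)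
  with sums_mult[OF binomial[unfolded coeff], of "p powr r"] assms show ?thesis
    by (simp add: powr_minus)
qed

lemma nb_expect_iterated:
  assumes "0 \<le> r1" and "0 \<le> r2" and "0 < p" and "p < 1" and "\<And>z j. \<bar>f z j\<bar> \<le> B"
  shows "nb_expect r1 r2 p f = (\<Sum>z. nb_pmf r1 p z * (\<Sum>j. nb_pmf r2 p j * f z j))"
proof -
  have "summable (\<lambda>j. nb_pmf r2 p j * f z j)" for z
    using assms by (intro summable_mult_bounded sums_summable[OF nb_pmf_sums] nb_pmf_nonneg)
  then show ?thesis
    unfolding nb_expect_def by (simp add: mult.assoc suminf_mult)
qed

lemma abs_nb_expect_le:
  assumes "0 \<le> r1" and "0 \<le> r2" and "0 < p" and "p < 1" and "\<And>z j. \<bar>f z j\<bar> \<le> B"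
  shows "\<bar>nb_expect r1 r2 p f\<bar> \<le> B"
  unfolding nb_expect_iterated[OF assms]
  using assms by (intro abs_suminf_mult_le nb_pmf_sums nb_pmf_nonneg) simp_all

lemma nb_expect_mono:
  assumes "0 \<le> r1" and "0 \<le> r2" and "0 < p" and "p < 1"
    and "\<And>z j. \<bar>f z j\<bar> \<le> B" and "\<And>z j. \<bar>g z j\<bar> \<le> B" and "\<And>z j. f z j \<le> g z j"
  shows "nb_expect r1 r2 p f \<le> nb_expect r1 r2 p g"
proof -
  have w1: "summable (nb_pmf r1 p)" and w2: "summable (nb_pmf r2 p)"
    using assms(1-4) by (simp_all add: sums_summable[OF nb_pmf_sums])
  have nonneg: "0 \<le> nb_pmf r1 p n" "0 \<le> nb_pmf r2 p n" for n
    using assms(1-4) by (simp_all add: nb_pmf_nonneg)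
  define F where "F z = (\<Sum>j. nb_pmf r2 p j * f z j)" for z
  define G where "G z = (\<Sum>j. nb_pmf r2 p j * g z j)" for z
  have "F z \<le> G z" for z
    unfolding F_def G_def using assms(5-7) nonneg
    by (intro suminf_le summable_mult_bounded[OF w2]) (auto intro: mult_left_mono)
  moreover have "\<bar>F z\<bar> \<le> B" "\<bar>G z\<bar> \<le> B" for z
    unfolding F_def G_def using assms by (intro abs_suminf_mult_le nb_pmf_sums nb_pmf_nonneg; simp)+
  ultimately have "(\<Sum>z. nb_pmf r1 p z * F z) \<le> (\<Sum>z. nb_pmf r1 p z * G z)"
    using nonneg by (intro suminf_le summable_mult_bounded[OF w1]) (auto intro: mult_left_mono)
  then show ?thesis
    using nb_expect_iterated[OF assms(1-5)] nb_expect_iterated[OF assms(1-4,6)]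
    by (simp add: F_def G_def)
qed

lemma p_t_gt_0: "0 < b0 \<Longrightarrow> 0 < p_t N b0 t"
  and p_t_less_1: "0 < b0 \<Longrightarrow> p_t N b0 t < 1"
  by (simp_all add: p_t_def add_pos_nonneg)

context
  fixes N T :: nat and a0 b0 :: real and xi :: nat and cp cu :: real
  assumes N_ge_1: "1 \<le> N" and a0_nonneg: "0 \<le> a0" and b0_pos: "0 < b0"
    and cp_nonneg: "0 \<le> cp" and cp_le_cu: "cp \<le> cu"
begin

abbreviation expect :: "nat \<Rightarrow> nat \<Rightarrow> (nat \<Rightarrow> nat \<Rightarrow> real) \<Rightarrow> real" where
  "expect t k f \<equiv> nb_expect (a0 + real k) ((real N - 1) * (a0 + real k)) (p_t N b0 t) f"

abbreviation V :: "nat \<Rightarrow> nat \<Rightarrow> nat \<Rightarrow> real" where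
  "V n \<equiv> Vrem N T a0 b0 xi cp cu n"

lemma nb_parameters_valid:
  "0 \<le> a0 + real k" "0 \<le> (real N - 1) * (a0 + real k)" "0 < p_t N b0 t" "p_t N b0 t < 1"
  using N_ge_1 a0_nonneg b0_pos by (simp_all add: p_t_gt_0 p_t_less_1)

lemma abs_expect_le: "(\<And>z j. \<bar>f z j\<bar> \<le> B) \<Longrightarrow> \<bar>expect t k f\<bar> \<le> B"
  by (rule abs_nb_expect_le[OF nb_parameters_valid])

lemma expect_shift_mono:
  assumes mono: "\<And>x y k. x \<le> y \<Longrightarrow> W x k \<le> W y k" and bounded: "\<And>x k. \<bar>W x k\<bar> \<le> B"
    and "x \<le> y"
  shows "expect t k (\<lambda>z j. W (x + z) (k + z + j)) \<le> expect t k (\<lambda>z j. W (y + z) (k + z + j))"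
  using \<open>x \<le> y\<close> by (intro nb_expect_mono[OF nb_parameters_valid bounded bounded] mono) simp

lemma qval_keep:
  "qval N a0 b0 xi cp cu t W x k 0 = fail_ind xi x * cu + expect t k (\<lambda>z j. W (x + z) (k + z + j))"
  by (simp add: qval_def cost_def)

lemma qval_replace:
  "qval N a0 b0 xi cp cu t W x k 1
     = (1 - fail_ind xi x) * cp + fail_ind xi x * cu + expect t k (\<lambda>z j. W z (k + z + j))"
  by (simp add: qval_def cost_def)

lemma V_Suc:
  "V (Suc n) x k =
     (if x < xi
      then min (expect (T - Suc n) k (\<lambda>z j. V n (x + z) (k + z + j)))
               (cp + expect (T - Suc n) k (\<lambda>z j. V n z (k + z + j)))
      else cu + expect (T - Suc n) k (\<lambda>z j. V n z (k + z + j)))"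
  using qval_keep qval_replace by (simp add: actions_def fail_ind_def)

lemma abs_V_le: "\<bar>V n x k\<bar> \<le> real (Suc n) * cu"
proof (induction n arbitrary: x k)
  case 0
  show ?case using cp_nonneg cp_le_cu by (simp add: fail_ind_def)
next
  case (Suc n)
  let ?B = "real (Suc n) * cu"
  obtain e c where V_eq: "V (Suc n) x k = (if x < xi then min e (cp + c) else cu + c)"
    and "\<bar>e\<bar> \<le> ?B" and "\<bar>c\<bar> \<le> ?B"
    by (rule that[OF V_Suc abs_expect_le[OF Suc.IH] abs_expect_le[OF Suc.IH]])
  with cp_nonneg cp_le_cu show ?case
    unfolding V_eq by (auto simp: abs_le_iff min_def algebra_simps)
qed

lemma V_mono: "x \<le> y \<Longrightarrow> V n x k \<le> V n y k"
proof (induction n arbitrary: x y k)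
  case 0
  then show ?case using cp_nonneg cp_le_cu by (simp add: fail_ind_def)
next
  case (Suc n)
  let ?t = "T - Suc n"
  have "expect ?t k (\<lambda>z j. V n (x + z) (k + z + j)) \<le> expect ?t k (\<lambda>z j. V n (y + z) (k + z + j))"
    using Suc by (intro expect_shift_mono[where B = "real (Suc n) * cu"] abs_V_le)
  with Suc.prems cp_le_cu show ?case
    unfolding V_Suc by (auto simp: min_le_iff_disj)
qed

lemma optimal_replace_iff:
  "optimal N T a0 b0 xi cp cu t x k 1 \<longleftrightarrow>
     xi \<le> x \<or>
     cp + expect t k (\<lambda>z j. V (T - Suc t) z (k + z + j))
       \<le> expect t k (\<lambda>z j. V (T - Suc t) (x + z) (k + z + j))"
  using qval_keep qval_replace
  by (cases "x < xi") (auto simp: optimal_def Vt_def actions_def fail_ind_def)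

lemma optimal_replace_upward_closed:
  assumes "optimal N T a0 b0 xi cp cu t x k 1" and "x \<le> y"
  shows "optimal N T a0 b0 xi cp cu t y k 1"
proof -
  have "expect t k (\<lambda>z j. V (T - Suc t) (x + z) (k + z + j))
      \<le> expect t k (\<lambda>z j. V (T - Suc t) (y + z) (k + z + j))"
    using V_mono abs_V_le \<open>x \<le> y\<close> by (rule expect_shift_mono)
  with assms show ?thesis
    unfolding optimal_replace_iff by auto
qed

lemma optimal_replace_control_limit:
  assumes "0 < cp" and "1 \<le> xi"
  shows "\<exists>\<delta>. 0 < \<delta> \<and> \<delta> \<le> xi \<and> (\<forall>x. optimal N T a0 b0 xi cp cu t x k 1 \<longleftrightarrow> \<delta> \<le> x)"
proof (rule nat_upward_closed_threshold)
  show "optimal N T a0 b0 xi cp cu t y k 1" if "optimal N T a0 b0 xi cp cu t x k 1" "x \<le> y" for x y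
    using that by (rule optimal_replace_upward_closed)
  show "optimal N T a0 b0 xi cp cu t xi k 1"
    unfolding optimal_replace_iff by simp
  show "\<not> optimal N T a0 b0 xi cp cu t 0 k 1"
    unfolding optimal_replace_iff using assms by simp
qed

end

theorem proposition2:
  fixes N T :: nat and a0 b0 :: real and xi :: "nat \<Rightarrow> nat" and cp cu :: "nat \<Rightarrow> real"
  assumes "N \<ge> 1" and "T \<ge> 1" and "a0 > 0" and "b0 > 0"
    and "\<forall>i\<in>{1..N}. xi i \<ge> 1"
    and "\<forall>i\<in>{1..N}. 0 < cp i \<and> cp i < cu i"
    and "t < T" and "i \<in> {1..N}"
  shows "\<exists>\<delta>::nat. 0 < \<delta> \<and> \<delta> \<le> xi i \<and>
           (\<forall>x::nat. optimal N T a0 b0 (xi i) (cp i) (cu i) t x k 1 \<longleftrightarrow> x \<ge> \<delta>)"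
proof -
  from assms(5,6,8) have "1 \<le> xi i" and "0 < cp i" and "cp i < cu i" by auto
  with assms(1,3,4) show ?thesis
    by (intro optimal_replace_control_limit) simp_all
qed

end
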